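(* Assume $R$ is totally ordered. Let $\mathcal{G}=(\mathcal{N},\mathcal{E})$ be a P-graph with Laplacian $L$ such that there are two nodes $i,j\in\mathcal{N}$ with $\mathcal{E}_{ji}\neq\emptyset$ and $L_{ij}=0$ (that is, the labels of the parallel edges from $j$ to $i$ sum to zero). Then there is a P-graph $\mathcal{G}'=(\mathcal{N},\mathcal{E}')$ with Laplacian $L$ and $\mathcal{E}'_{ji}=\emptyset$. Moreover, the edges of $\mathcal{G}'$ and $\mathcal{G}$ agree after potentially splitting some edges of $\mathcal{G}$ with source $j$ into several parallel edges.
   Context: $R$ is a ring with a total order compatible with the ring operations; $R_{<0},R_{>0},R_{\ge0}$ denote negative, positive, nonnegative elements. $\mathcal{G}=(\mathcal{N},\mathcal{E})$ is a multidigraph with source/target maps $s,t$, no self-loops, $\mathcal{N}=\{1,\dots,m+1\}$, labeling $\pi\colon\mathcal{E}\to R$; $\mathcal{E}_{ji}=\{e: s(e)=j,t(e)=i\}$. Laplacian: $L_{ij}=\sum_{e\in\mathcal{E}_{ji}}\pi(e)$ for $i\ne j$, $L_{ii}=-\sum_{k\ne i}L_{ki}$. Splitting an edge $e$ means replacing it by several parallel edges (same source and target) whose labels sum to $\pi(e)$. A cycle is a closed directed path with no repeated nodes. $\mathcal{E}^-=\{e:\pi(e)\in R_{<0}\}$, $\mathcal{E}^+=\{e:\pi(e)\in R_{>0}\}$. An edge partition $(\mathcal{G},\mu)$, $\mu\colon\mathcal{E}^-\to\mathcal{P}(\mathcal{E}^+)$, satisfies (i) $\mathcal{E}=\mathcal{E}^+\sqcup\mathcal{E}^-$;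 (ii) every cycle contains at most one edge of $\mathcal{E}^-$; (iii) for $e\in\mathcal{E}^-$: (a) $e'\in\mu(e)\Rightarrow s(e')=s(e)$; (b) $e'\in\mu(e)\Rightarrow$ every cycle containing $e'$ contains $t(e)$; (c) $\mu(e)\cap\mu(e')=\emptyset$ for $e\ne e'$. $\mathcal{G}$ is a P-graph if some edge partition $(\mathcal{G},\mu)$ also satisfies (iv) $\pi(e)+\sum_{e'\in\mu(e)}\pi(e')\in R_{\ge0}$ for all $e\in\mathcal{E}^-$. *)

theory Defs
  imports Main
begin

text \<open>Edges are identified by natural
numbers (an arbitrary finite set E of identifiers); s, t are source and target maps and
pi is the labelling into an ordered ring.\<close>

definition nodes :: "nat \<Rightarrow> nat set" where
  "nodes m = {1..m+1}"

definition multidigraph :: "nat \<Rightarrow> nat set \<Rightarrow> (nat \<Rightarrow> nat) \<Rightarrow> (nat \<Rightarrow> nat) \<Rightarrow> bool" where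
  "multidigraph m E s t \<longleftrightarrow> finite E \<and>
     (\<forall>e\<in>E. s e \<in> nodes m \<and> t e \<in> nodes m \<and> s e \<noteq> t e)"

definition edges_between :: "nat set \<Rightarrow> (nat \<Rightarrow> nat) \<Rightarrow> (nat \<Rightarrow> nat) \<Rightarrow> nat \<Rightarrow> nat \<Rightarrow> nat set" where
  "edges_between E s t j i = {e\<in>E. s e = j \<and> t e = i}"

definition laplacian ::
  "nat \<Rightarrow> nat set \<Rightarrow> (nat \<Rightarrow> nat) \<Rightarrow> (nat \<Rightarrow> nat) \<Rightarrow> (nat \<Rightarrow> 'r::ab_group_add) \<Rightarrow> nat \<Rightarrow> nat \<Rightarrow> 'r" where
  "laplacian m E s t \<pi> i j =
     (if i \<noteq> j then (\<Sum>e\<in>edges_between E s t j i. \<pi> e)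
      else - (\<Sum>k\<in>nodes m - {i}. (\<Sum>e\<in>edges_between E s t i k. \<pi> e)))"

definition is_cycle :: "nat set \<Rightarrow> (nat \<Rightarrow> nat) \<Rightarrow> (nat \<Rightarrow> nat) \<Rightarrow> nat list \<Rightarrow> bool" where
  "is_cycle E s t c \<longleftrightarrow> c \<noteq> [] \<and> set c \<subseteq> E \<and>
     (\<forall>l. Suc l < length c \<longrightarrow> t (c ! l) = s (c ! Suc l)) \<and>
     t (last c) = s (hd c) \<and> distinct (map s c)"

definition cycle_nodes :: "(nat \<Rightarrow> nat) \<Rightarrow> nat list \<Rightarrow> nat set" where
  "cycle_nodes s c = s ` set c"

definition neg_edges :: "nat set \<Rightarrow> (nat \<Rightarrow> 'r::linordered_ring_strict) \<Rightarrow> nat set" where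
  "neg_edges E \<pi> = {e\<in>E. \<pi> e < 0}"

definition pos_edges :: "nat set \<Rightarrow> (nat \<Rightarrow> 'r::linordered_ring_strict) \<Rightarrow> nat set" where
  "pos_edges E \<pi> = {e\<in>E. \<pi> e > 0}"

definition edge_partition ::
  "nat set \<Rightarrow> (nat \<Rightarrow> nat) \<Rightarrow> (nat \<Rightarrow> nat) \<Rightarrow> (nat \<Rightarrow> 'r::linordered_ring_strict) \<Rightarrow> (nat \<Rightarrow> nat set) \<Rightarrow> bool" where
  "edge_partition E s t \<pi> \<mu> \<longleftrightarrow>
     (\<forall>e\<in>E. \<pi> e \<noteq> 0) \<and>
     (\<forall>c. is_cycle E s t c \<longrightarrow> card (set c \<inter> neg_edges E \<pi>) \<le> 1) \<and>
     (\<forall>e\<in>neg_edges E \<pi>. \<mu> e \<subseteq> pos_edges E \<pi> \<and>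
        (\<forall>e'\<in>\<mu> e. s e' = s e) \<and>
        (\<forall>e'\<in>\<mu> e. \<forall>c. is_cycle E s t c \<and> e' \<in> set c \<longrightarrow> t e \<in> cycle_nodes s c)) \<and>
     (\<forall>e\<in>neg_edges E \<pi>. \<forall>e'\<in>neg_edges E \<pi>. e \<noteq> e' \<longrightarrow> \<mu> e \<inter> \<mu> e' = {})"

definition P_graph ::
  "nat \<Rightarrow> nat set \<Rightarrow> (nat \<Rightarrow> nat) \<Rightarrow> (nat \<Rightarrow> nat) \<Rightarrow> (nat \<Rightarrow> 'r::linordered_ring_strict) \<Rightarrow> bool" where
  "P_graph m E s t \<pi> \<longleftrightarrow> multidigraph m E s t \<and>
     (\<exists>\<mu>. edge_partition E s t \<pi> \<mu> \<and>
        (\<forall>e\<in>neg_edges E \<pi>. \<pi> e + (\<Sum>e'\<in>\<mu> e. \<pi> e') \<ge> 0))"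

text \<open>G' = (E', s', t', pi') arises from G by deleting the edges from j to i and splitting
some edges of G with source j into several parallel edges: phi sends every edge of G' to
the edge of G it comes from.\<close>
definition split_from ::
  "nat set \<Rightarrow> (nat \<Rightarrow> nat) \<Rightarrow> (nat \<Rightarrow> nat) \<Rightarrow> (nat \<Rightarrow> 'r::ab_group_add) \<Rightarrow>
   nat set \<Rightarrow> (nat \<Rightarrow> nat) \<Rightarrow> (nat \<Rightarrow> nat) \<Rightarrow> (nat \<Rightarrow> 'r) \<Rightarrow> nat \<Rightarrow> nat \<Rightarrow> bool" where
  "split_from E s t \<pi> E' s' t' \<pi>' j i \<longleftrightarrow>
     (\<exists>\<phi>. \<phi> ` E' = E - edges_between E s t j i \<and>
        (\<forall>e'\<in>E'. s' e' = s (\<phi> e') \<and> t' e' = t (\<phi> e')) \<and>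
        (\<forall>e\<in>E - edges_between E s t j i.
            (\<Sum>e'\<in>{e'\<in>E'. \<phi> e' = e}. \<pi>' e') = \<pi> e \<and>
            (card {e'\<in>E'. \<phi> e' = e} \<noteq> 1 \<longrightarrow> s e = j)))"

end

(* The negative edges from j to i are compensated by their partners, so by the cancellation
   of the labels from j to i these partners outweigh the positive edges from j to i.  Hence the
   surviving partners of the negative edges from j to i can be split into shares covering, for
   every other negative edge d, the part of its compensation lost with the deleted positive edges
   from j to i (a transportation problem).  These shares become new partners of d: they start at
   j like d, and a cycle through one of them passes through j and i, so it can be shortcut by a
   deleted partner of d, which puts the target of d on the cycle. *)

theory Submission
  imports Defs "HOL-Library.Nat_Bijection"
begin

section \<open>Cycles\<close>

lemma is_cycle_iff_mod:
  "is_cycle E s t c \<longleftrightarrow> c \<noteq> [] \<and> set c \<subseteq> E \<and>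
     (\<forall>l < length c. t (c ! l) = s (c ! (Suc l mod length c))) \<and> distinct (map s c)"
proof
  assume cyc: "is_cycle E s t c"
  then have ne: "c \<noteq> []" by (simp add: is_cycle_def)
  have "t (c ! l) = s (c ! (Suc l mod length c))" if l: "l < length c" for l
  proof (cases "Suc l < length c")
    case True
    then show ?thesis using cyc by (simp add: is_cycle_def)
  next
    case False
    then have "l = length c - 1" "Suc l = length c" using l by auto
    then show ?thesis using cyc ne by (simp add: is_cycle_def last_conv_nth hd_conv_nth)
  qed
  then show "c \<noteq> [] \<and> set c \<subseteq> E \<and>
     (\<forall>l < length c. t (c ! l) = s (c ! (Suc l mod length c))) \<and> distinct (map s c)"
    using cyc by (simp add: is_cycle_def)
next
  assume c: "c \<noteq> [] \<and> set c \<subseteq> E \<and>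
     (\<forall>l < length c. t (c ! l) = s (c ! (Suc l mod length c))) \<and> distinct (map s c)"
  then have "t (c ! (length c - 1)) = s (c ! 0)"
    by (metis One_nat_def Suc_pred diff_less length_greater_0_conv less_one mod_self)
  with c show "is_cycle E s t c"
    by (simp add: is_cycle_def last_conv_nth hd_conv_nth)
qed

lemma is_cycle_rotate:
  assumes "is_cycle E s t c"
  shows "is_cycle E s t (rotate a c)"
proof -
  let ?L = "length c"
  have L: "0 < ?L" using assms by (simp add: is_cycle_def)
  have "t (rotate a c ! k) = s (rotate a c ! (Suc k mod ?L))" if k: "k < ?L" for k
  proof -
    have "t (rotate a c ! k) = s (c ! (Suc ((a + k) mod ?L) mod ?L))"
      using assms L k by (simp add: is_cycle_iff_mod nth_rotate)
    also have "Suc ((a + k) mod ?L) mod ?L = (a + Suc k mod ?L) mod ?L"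
      by (metis add_Suc_right mod_Suc_eq mod_add_right_eq)
    finally show ?thesis using L by (simp add: nth_rotate)
  qed
  then show ?thesis using assms by (simp add: is_cycle_iff_mod rotate_map[symmetric])
qed

lemma is_cycle_close_prefix:
  assumes cyc: "is_cycle E s t d" and m: "0 < m" "m < length d"
    and p: "p \<in> E" "s p = s (d ! m)" "t p = s (d ! 0)"
  shows "is_cycle E s t (p # take m d)"
  unfolding is_cycle_def
proof (intro conjI allI impI)
  show "p # take m d \<noteq> []" by simp
  show "set (p # take m d) \<subseteq> E"
    using cyc p(1) set_take_subset[of m d] by (auto simp: is_cycle_def)
next
  fix l assume l: "Suc l < length (p # take m d)"
  show "t ((p # take m d) ! l) = s ((p # take m d) ! Suc l)"
    using l m p cyc by (cases l) (auto simp: is_cycle_def)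
next
  show "t (last (p # take m d)) = s (hd (p # take m d))"
    using m p cyc is_cycle_iff_mod[of E s t d]
    by (simp add: last_conv_nth)
next
  have dist: "distinct (map s d)" using cyc by (simp add: is_cycle_def)
  have "s p \<notin> s ` set (take m d)"
  proof
    assume "s p \<in> s ` set (take m d)"
    then obtain k where "k < m" "s (d ! k) = s p" using m by (auto simp: in_set_conv_nth)
    then show False using nth_eq_iff_index_eq[OF dist, of k m] m p(2) by simp
  qed
  moreover have "distinct (map s (take m d))" using dist by (simp add: take_map[symmetric])
  ultimately show "distinct (map s (p # take m d))" by simp
qed

lemma is_cycle_chord:
  assumes cyc: "is_cycle E s t c" and i: "i \<in> cycle_nodes s c" and j: "j \<in> cycle_nodes s c"
    and ij: "i \<noteq> j" and p: "p \<in> E" "s p = j" "t p = i"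
  shows "\<exists>c'. is_cycle E s t c' \<and> p \<in> set c' \<and> cycle_nodes s c' \<subseteq> cycle_nodes s c"
proof -
  obtain a where a: "a < length c" "s (c ! a) = i"
    using i unfolding cycle_nodes_def by (auto simp: in_set_conv_nth)
  define d where "d = rotate a c"
  have d: "is_cycle E s t d" "set d = set c" "length d = length c"
    using is_cycle_rotate[OF cyc] by (simp_all add: d_def)
  have "c \<noteq> []" using a by auto
  then have d0: "s (d ! 0) = i" using a nth_rotate[of 0 c a] by (simp add: d_def)
  have "j \<in> s ` set d" using j d(2) by (simp add: cycle_nodes_def)
  then obtain m where m: "m < length d" "s (d ! m) = j" by (auto simp: in_set_conv_nth)
  have "m \<noteq> 0" using d0 m(2) ij by (cases m) auto
  then have "is_cycle E s t (p # take m d)"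
    using is_cycle_close_prefix[OF d(1), of m p] m d0 p by simp
  moreover have "cycle_nodes s (p # take m d) \<subseteq> cycle_nodes s c"
    using set_take_subset[of m d] d(2) j p(2) unfolding cycle_nodes_def by auto
  ultimately show ?thesis by force
qed

lemma is_cycle_map:
  assumes "is_cycle E' (s \<circ> \<phi>) (t \<circ> \<phi>) c" "\<phi> ` E' \<subseteq> E"
  shows "is_cycle E s t (map \<phi> c)" and "cycle_nodes (s \<circ> \<phi>) c = cycle_nodes s (map \<phi> c)"
  using assms by (auto simp: is_cycle_def cycle_nodes_def last_map hd_map)

section \<open>Transportation plans\<close>

lemma exists_nonneg_minorant_with_sum:
  fixes f :: "'a \<Rightarrow> 'r::linordered_ab_group_add"
  assumes "finite A" "\<forall>k\<in>A. 0 \<le> f k" "0 \<le> c" "c \<le> sum f A"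
  shows "\<exists>y. (\<forall>k. 0 \<le> y k) \<and> (\<forall>k\<in>A. y k \<le> f k) \<and> sum y A = c"
  using assms
proof (induction A arbitrary: c rule: finite_induct)
  case empty
  then show ?case by (intro exI[of _ "\<lambda>_. 0"]) auto
next
  case (insert k A)
  define c' where "c' = min c (sum f A)"
  have "0 \<le> sum f A" using insert by (simp add: sum_nonneg)
  then have "0 \<le> c'" "c' \<le> sum f A" using insert by (auto simp: c'_def)
  then obtain y where y: "\<forall>k. 0 \<le> y k" "\<forall>k\<in>A. y k \<le> f k" "sum y A = c'"
    using insert by blast
  have "c - c' \<le> f k" "0 \<le> c - c'"
    using insert by (auto simp: c'_def min_def diff_le_eq add.commute)
  moreover have "sum (y(k := c - c')) A = sum y A" using insert by (intro sum.cong) auto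
  ultimately show ?case
    using insert y by (intro exI[of _ "y(k := c - c')"]) auto
qed

lemma exists_transport_plan:
  fixes a b :: "'a \<Rightarrow> 'r::linordered_ab_group_add"
  assumes "finite A" "finite B" "\<forall>k\<in>A. 0 \<le> a k" "\<forall>l\<in>B. 0 \<le> b l" "sum b B \<le> sum a A"
  shows "\<exists>x. (\<forall>k l. 0 \<le> x k l) \<and> (\<forall>k\<in>A. (\<Sum>l\<in>B. x k l) \<le> a k) \<and>
             (\<forall>l\<in>B. (\<Sum>k\<in>A. x k l) = b l)"
  using assms(2,4,5)
proof (induction B rule: finite_induct)
  case empty
  then show ?case using assms(3) by (intro exI[of _ "\<lambda>_ _. 0"]) auto
next
  case (insert l B)
  have bl: "0 \<le> b l" and bB: "\<forall>l\<in>B. 0 \<le> b l" using insert.prems(1) by auto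
  have sle: "b l + sum b B \<le> sum a A" using insert.prems(2) insert.hyps by simp
  have "sum b B \<le> sum a A" using add_increasing[OF bl order_refl] sle by (rule order_trans)
  then obtain x where x: "\<forall>k l. 0 \<le> x k l" "\<forall>k\<in>A. (\<Sum>l\<in>B. x k l) \<le> a k"
     "\<forall>l\<in>B. (\<Sum>k\<in>A. x k l) = b l" using insert.IH[OF bB] by blast
  define r where "r k = a k - (\<Sum>l\<in>B. x k l)" for k
  have "(\<Sum>k\<in>A. \<Sum>l\<in>B. x k l) = sum b B"
    using x(3) by (subst sum.swap) simp
  then have "sum r A = sum a A - sum b B" by (simp add: r_def sum_subtractf)
  then have "b l \<le> sum r A" using sle by (simp add: le_diff_eq)
  moreover have "\<forall>k\<in>A. 0 \<le> r k" using x(2) by (simp add: r_def)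
  ultimately obtain y where y: "\<forall>k. 0 \<le> y k" "\<forall>k\<in>A. y k \<le> r k" "sum y A = b l"
    using exists_nonneg_minorant_with_sum[OF assms(1)] bl by blast
  define x' where "x' k l' = (if l' = l then y k else x k l')" for k l'
  have row: "(\<Sum>l'\<in>insert l B. x' k l') = y k + (\<Sum>l'\<in>B. x k l')" for k
  proof -
    have "(\<Sum>l'\<in>B. x' k l') = (\<Sum>l'\<in>B. x k l')"
      using insert.hyps(2) by (intro sum.cong) (auto simp: x'_def)
    then show ?thesis using insert.hyps by (simp add: x'_def)
  qed
  have col: "(\<Sum>k\<in>A. x' k l') = b l'" if "l' \<in> insert l B" for l'
  proof (cases "l' = l")
    case True
    then show ?thesis using y(3) by (simp add: x'_def)
  next
    case False
    then show ?thesis using that x(3) by (simp add: x'_def)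
  qed
  show ?case
    using x(1) y(1,2) row col by (intro exI[of _ x']) (auto simp: x'_def r_def le_diff_eq)
qed

lemma sum_diff_le_sum_diff:
  fixes f :: "'a \<Rightarrow> 'b::ordered_ab_group_add"
  assumes "finite A" "finite B" "sum f A \<le> sum f B"
  shows "sum f (A - B) \<le> sum f (B - A)"
proof -
  have "sum f A = sum f (A \<inter> B) + sum f (A - B)" "sum f B = sum f (A \<inter> B) + sum f (B - A)"
    using sum.Int_Diff[OF assms(1), of f B] sum.Int_Diff[OF assms(2), of f A]
    by (simp_all add: Int_commute)
  then show ?thesis using assms(3) by simp
qed

section \<open>Labelled edge sums\<close>

lemma sum_edges_between_pullback:
  assumes "finite E'" "finite E" "\<phi> ` E' \<subseteq> E"
    and fibers: "\<forall>e\<in>E. sum \<pi>' {c \<in> E'. \<phi> c = e} = \<pi> e"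
  shows "sum \<pi>' (edges_between E' (s \<circ> \<phi>) (t \<circ> \<phi>) u v) = sum \<pi> (edges_between E s t u v)"
proof -
  let ?T = "edges_between E s t u v"
  let ?S = "{c \<in> E'. \<phi> c \<in> ?T}"
  have "edges_between E' (s \<circ> \<phi>) (t \<circ> \<phi>) u v = ?S"
    using assms(3) by (auto simp: edges_between_def)
  then have "sum \<pi>' (edges_between E' (s \<circ> \<phi>) (t \<circ> \<phi>) u v) = sum \<pi>' ?S" by simp
  also have "\<dots> = (\<Sum>e\<in>?T. sum \<pi>' {c. c \<in> ?S \<and> \<phi> c = e})"
    by (rule sum.group[symmetric]) (use assms(1,2) in \<open>auto simp: edges_between_def\<close>)
  also have "\<dots> = (\<Sum>e\<in>?T. sum \<pi>' {c \<in> E'. \<phi> c = e})"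
    by (intro sum.cong refl arg_cong[where f = "sum \<pi>'"]) auto
  also have "\<dots> = sum \<pi> ?T"
    using fibers by (intro sum.cong) (auto simp: edges_between_def)
  finally show ?thesis .
qed

lemma sum_edges_between_remove_null:
  assumes "sum \<pi> (edges_between E s t j i) = 0"
  shows "sum \<pi> (edges_between (E - edges_between E s t j i) s t u v) = sum \<pi> (edges_between E s t u v)"
proof (cases "u = j \<and> v = i")
  case True
  then have "edges_between (E - edges_between E s t j i) s t u v = {}"
    by (auto simp: edges_between_def)
  then show ?thesis using True assms by simp
next
  case False
  then have "edges_between (E - edges_between E s t j i) s t u v = edges_between E s t u v"
    by (auto simp: edges_between_def)
  then show ?thesis by simp
qed

section \<open>Deleting parallel edges with vanishing total label\<close>

locale cancelling_pair =
  fixes m :: nat and E :: "nat set" and s t :: "nat \<Rightarrow> nat"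
    and \<pi> :: "nat \<Rightarrow> 'r::linordered_ring_strict" and \<mu> :: "nat \<Rightarrow> nat set" and i j :: nat
  assumes graph: "multidigraph m E s t"
    and partition: "edge_partition E s t \<pi> \<mu>"
    and balanced: "\<forall>e\<in>neg_edges E \<pi>. 0 \<le> \<pi> e + sum \<pi> (\<mu> e)"
    and ends_distinct: "i \<noteq> j"
    and cancelling: "sum \<pi> (edges_between E s t j i) = 0"
begin

lemma finite_edges: "finite E"
  using graph by (simp add: multidigraph_def)

lemma label_nonzero: "e \<in> E \<Longrightarrow> \<pi> e \<noteq> 0"
  using partition by (simp add: edge_partition_def)

lemma cycle_card_neg: "is_cycle E s t c \<Longrightarrow> card (set c \<inter> neg_edges E \<pi>) \<le> 1"
  using partition by (simp add: edge_partition_def)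

lemma mu_subset_pos: "e \<in> neg_edges E \<pi> \<Longrightarrow> \<mu> e \<subseteq> pos_edges E \<pi>"
  using partition by (simp add: edge_partition_def)

lemma mu_source: "e \<in> neg_edges E \<pi> \<Longrightarrow> q \<in> \<mu> e \<Longrightarrow> s q = s e"
  using partition by (simp add: edge_partition_def)

lemma mu_cycle:
  "e \<in> neg_edges E \<pi> \<Longrightarrow> q \<in> \<mu> e \<Longrightarrow> is_cycle E s t c \<Longrightarrow> q \<in> set c \<Longrightarrow> t e \<in> cycle_nodes s c"
  using partition unfolding edge_partition_def by blast

lemma mu_disjoint:
  "e \<in> neg_edges E \<pi> \<Longrightarrow> e' \<in> neg_edges E \<pi> \<Longrightarrow> e \<noteq> e' \<Longrightarrow> \<mu> e \<inter> \<mu> e' = {}"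
  using partition by (simp add: edge_partition_def)

lemma pos_edges_subset: "pos_edges E \<pi> \<subseteq> E"
  by (auto simp: pos_edges_def)

lemma finite_mu: "e \<in> neg_edges E \<pi> \<Longrightarrow> finite (\<mu> e)"
  using finite_subset[OF subset_trans[OF mu_subset_pos pos_edges_subset] finite_edges] .

definition Eji :: "nat set" where
  "Eji = edges_between E s t j i"

definition Nji :: "nat set" where
  "Nji = Eji \<inter> neg_edges E \<pi>"

definition Pji :: "nat set" where
  "Pji = Eji \<inter> pos_edges E \<pi>"

text \<open>Deleting the edges from j to i leaves every negative edge outside Nji short of the
  partners it had in Pji; the positive partners of Nji outside Pji survive and have to make up
  for this loss.\<close>

definition supply_edges :: "nat set" where
  "supply_edges = \<Union>(\<mu> ` Nji) - Pji"

definition other_neg :: "nat set" where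
  "other_neg = neg_edges E \<pi> - Nji"

definition demand :: "nat \<Rightarrow> 'r" where
  "demand e = sum \<pi> (\<mu> e \<inter> Pji)"

lemma Eji_iff: "e \<in> Eji \<longleftrightarrow> e \<in> E \<and> s e = j \<and> t e = i"
  by (simp add: Eji_def edges_between_def)

lemma finite_Nji: "finite Nji"
  using finite_edges by (simp add: Nji_def Eji_def edges_between_def)

lemma finite_Pji: "finite Pji"
  using finite_edges by (simp add: Pji_def Eji_def edges_between_def)

lemma finite_mu_Nji: "finite (\<Union>(\<mu> ` Nji))"
  using finite_Nji finite_mu by (simp add: Nji_def)

lemma finite_supply: "finite supply_edges"
  using finite_mu_Nji by (simp add: supply_edges_def)

lemma finite_other_neg: "finite other_neg"
  using finite_edges by (simp add: other_neg_def neg_edges_def)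

lemma Eji_split: "Eji = Nji \<union> Pji" "Nji \<inter> Pji = {}"
  using label_nonzero unfolding Nji_def Pji_def neg_edges_def pos_edges_def
  by (auto simp: Eji_iff) (meson neq_iff)

lemma supply_subset: "supply_edges \<subseteq> pos_edges E \<pi> - Eji"
  using mu_subset_pos unfolding supply_edges_def Nji_def Pji_def by blast

lemma supply_source: "q \<in> supply_edges \<Longrightarrow> s q = j"
  using mu_source unfolding supply_edges_def Nji_def by (auto simp: Eji_iff)

lemma supply_cycle: "q \<in> supply_edges \<Longrightarrow> is_cycle E s t c \<Longrightarrow> q \<in> set c \<Longrightarrow> i \<in> cycle_nodes s c"
  using mu_cycle unfolding supply_edges_def Nji_def by (fastforce simp: Eji_iff)

lemma mu_other_neg_disjoint: "e \<in> other_neg \<Longrightarrow> \<mu> e \<inter> \<Union>(\<mu> ` Nji) = {}"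
  using mu_disjoint unfolding other_neg_def Nji_def by blast

lemma sum_Pji_le: "sum \<pi> Pji \<le> sum \<pi> (\<Union>(\<mu> ` Nji))"
proof -
  have "sum \<pi> (\<Union>(\<mu> ` Nji)) = (\<Sum>n\<in>Nji. sum \<pi> (\<mu> n))"
    using finite_mu mu_disjoint by (intro sum.UNION_disjoint finite_Nji) (auto simp: Nji_def)
  moreover have "0 \<le> (\<Sum>n\<in>Nji. \<pi> n + sum \<pi> (\<mu> n))"
    using balanced by (intro sum_nonneg) (auto simp: Nji_def)
  moreover have "sum \<pi> Nji + sum \<pi> Pji = 0"
    using cancelling Eji_split finite_Nji finite_Pji
    by (simp add: Eji_def sum.union_disjoint[symmetric])
  ultimately show ?thesis
    by (simp add: sum.distrib add.commute add_eq_0_iff2 neg_le_iff_le)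
qed

lemma demand_le_supply: "sum demand other_neg \<le> sum \<pi> supply_edges"
proof -
  let ?F = "\<Union>(\<mu> ` Nji)"
  have "sum demand other_neg = sum \<pi> (\<Union>e\<in>other_neg. \<mu> e \<inter> Pji)"
    unfolding demand_def using finite_mu mu_disjoint
    by (intro sum.UNION_disjoint[symmetric] finite_other_neg) (auto simp: other_neg_def)
  also have "\<dots> \<le> sum \<pi> (Pji - ?F)"
    using finite_Pji mu_other_neg_disjoint
    by (intro sum_mono2) (auto simp: Pji_def pos_edges_def)
  also have "\<dots> \<le> sum \<pi> (?F - Pji)"
    using sum_diff_le_sum_diff[OF finite_Pji finite_mu_Nji sum_Pji_le] .
  finally show ?thesis by (simp add: supply_edges_def)
qed

lemma demand_nonneg: "0 \<le> demand e"
  unfolding demand_def by (intro sum_nonneg) (auto simp: Pji_def pos_edges_def)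

lemma exists_plan:
  obtains x where "\<forall>q d. 0 \<le> x q d" "\<forall>q\<in>supply_edges. (\<Sum>d\<in>other_neg. x q d) \<le> \<pi> q"
    "\<forall>d\<in>other_neg. (\<Sum>q\<in>supply_edges. x q d) = demand d"
proof -
  have "\<forall>q\<in>supply_edges. 0 \<le> \<pi> q" using supply_subset by (auto simp: pos_edges_def)
  then show ?thesis
    using exists_transport_plan[OF finite_supply finite_other_neg _ _ demand_le_supply]
      demand_nonneg that by blast
qed

lemma mu_cycle_through_supply:
  assumes d: "d \<in> other_neg" and p: "p \<in> \<mu> d" "p \<in> Pji" and q: "q \<in> supply_edges"
    and cyc: "is_cycle E s t c" "q \<in> set c"
  shows "t d \<in> cycle_nodes s c"
proof -
  have "i \<in> cycle_nodes s c" using supply_cycle[OF q cyc] .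
  moreover have "j \<in> cycle_nodes s c" using supply_source[OF q] cyc(2) by (auto simp: cycle_nodes_def)
  moreover have "p \<in> E" "s p = j" "t p = i" using p(2) by (auto simp: Pji_def Eji_iff)
  ultimately obtain c' where "is_cycle E s t c'" "p \<in> set c'" "cycle_nodes s c' \<subseteq> cycle_nodes s c"
    using is_cycle_chord[OF cyc(1) _ _ ends_distinct] by blast
  moreover have "d \<in> neg_edges E \<pi>" using d by (simp add: other_neg_def)
  ultimately show ?thesis using mu_cycle p(1) by blast
qed

end

locale cancelling_pair_plan =
  cancelling_pair m E s t \<pi> \<mu> i j
  for m E s t and \<pi> :: "nat \<Rightarrow> 'r::linordered_ring_strict" and \<mu> i j +
  fixes x :: "nat \<Rightarrow> nat \<Rightarrow> 'r"
  assumes plan_nonneg: "0 \<le> x q d"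
    and plan_supply: "q \<in> supply_edges \<Longrightarrow> (\<Sum>d\<in>other_neg. x q d) \<le> \<pi> q"
    and plan_demand: "d \<in> other_neg \<Longrightarrow> (\<Sum>q\<in>supply_edges. x q d) = demand d"
begin

text \<open>The new edge prod_encode (e, 0) is the copy of e, reduced by the shares x e d if e is a
  supply edge; prod_encode (q, Suc d) is the share x q d of q, a new positive partner of d.\<close>

definition origin :: "nat \<Rightarrow> nat" where
  "origin c = fst (prod_decode c)"

definition new_label :: "nat \<Rightarrow> 'r" where
  "new_label c = (case prod_decode c of (e, k) \<Rightarrow>
     if k = 0 then (if e \<in> supply_edges then \<pi> e - (\<Sum>d\<in>other_neg. x e d) else \<pi> e)
     else x e (k - 1))"

definition candidates :: "nat set" where
  "candidates = (\<lambda>e. prod_encode (e, 0)) ` (E - Eji) \<union>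
     (\<lambda>(q, d). prod_encode (q, Suc d)) ` (supply_edges \<times> other_neg)"

definition new_edges :: "nat set" where
  "new_edges = {c \<in> candidates. new_label c \<noteq> 0}"

definition new_mu :: "nat \<Rightarrow> nat set" where
  "new_mu c = (\<lambda>q. prod_encode (q, 0)) ` (\<mu> (origin c) - Pji) \<union>
     (\<lambda>q. prod_encode (q, Suc (origin c))) ` {q \<in> supply_edges. x q (origin c) \<noteq> 0}"

lemma origin_encode [simp]: "origin (prod_encode (e, k)) = e"
  by (simp add: origin_def)

lemma new_label_copy:
  "new_label (prod_encode (e, 0)) =
     (if e \<in> supply_edges then \<pi> e - (\<Sum>d\<in>other_neg. x e d) else \<pi> e)"
  by (simp add: new_label_def)

lemma new_label_share [simp]: "new_label (prod_encode (q, Suc d)) = x q d"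
  by (simp add: new_label_def)

lemma copy_label_nonneg: "q \<in> supply_edges \<Longrightarrow> 0 \<le> new_label (prod_encode (q, 0))"
  using plan_supply by (simp add: new_label_copy)

lemma supply_subset_edges: "supply_edges \<subseteq> E - Eji"
  using supply_subset pos_edges_subset by blast

lemma copy_in_candidates: "e \<in> E - Eji \<Longrightarrow> prod_encode (e, 0) \<in> candidates"
  by (simp add: candidates_def)

lemma share_in_candidates:
  "q \<in> supply_edges \<Longrightarrow> d \<in> other_neg \<Longrightarrow> prod_encode (q, Suc d) \<in> candidates"
  unfolding candidates_def by (intro UnI2 image_eqI[where x = "(q, d)"]) auto

lemma origin_candidates: "c \<in> candidates \<Longrightarrow> origin c \<in> E - Eji"
  using supply_subset_edges by (auto simp: candidates_def)

lemma origin_new_edges: "origin ` new_edges \<subseteq> E - Eji"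
  using origin_candidates by (auto simp: new_edges_def)

lemma finite_new_edges: "finite new_edges"
  using finite_edges finite_supply finite_other_neg by (simp add: new_edges_def candidates_def)

lemma fiber_candidates:
  assumes "e \<in> E - Eji"
  shows "{c \<in> candidates. origin c = e} = insert (prod_encode (e, 0))
      ((\<lambda>d. prod_encode (e, Suc d)) ` (if e \<in> supply_edges then other_neg else {}))"
  using assms by (auto simp: candidates_def)

lemma fiber_sum:
  assumes e: "e \<in> E - Eji"
  shows "sum new_label {c \<in> new_edges. origin c = e} = \<pi> e"
proof -
  let ?D = "if e \<in> supply_edges then other_neg else {}"
  have "{c \<in> new_edges. origin c = e} = {c \<in> candidates. origin c = e} - {c. new_label c = 0}"
    by (auto simp: new_edges_def)
  then have "sum new_label {c \<in> new_edges. origin c = e} = sum new_label {c \<in> candidates. origin c = e}"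
    using finite_new_edges by (simp add: sum.setdiff_irrelevant finite_edges finite_supply
        finite_other_neg candidates_def)
  also have "\<dots> = new_label (prod_encode (e, 0)) + sum new_label ((\<lambda>d. prod_encode (e, Suc d)) ` ?D)"
    unfolding fiber_candidates[OF e] using finite_other_neg by (subst sum.insert) auto
  also have "\<dots> = new_label (prod_encode (e, 0)) + (\<Sum>d\<in>?D. x e d)"
    by (subst sum.reindex) (auto simp: inj_on_def)
  also have "\<dots> = \<pi> e"
    by (simp add: new_label_copy)
  finally show ?thesis .
qed

lemma fiber_outside_supply:
  assumes "e \<in> E - Eji" "e \<notin> supply_edges"
  shows "{c \<in> new_edges. origin c = e} = {prod_encode (e, 0)}"
  using assms fiber_candidates[OF assms(1)] label_nonzero
  by (auto simp: new_edges_def new_label_copy)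

lemma laplacian_new:
  "laplacian m new_edges (s \<circ> origin) (t \<circ> origin) new_label a b = laplacian m E s t \<pi> a b"
proof -
  have "sum new_label (edges_between new_edges (s \<circ> origin) (t \<circ> origin) u v)
      = sum \<pi> (edges_between E s t u v)" for u v
  proof -
    have "sum new_label (edges_between new_edges (s \<circ> origin) (t \<circ> origin) u v)
        = sum \<pi> (edges_between (E - Eji) s t u v)"
      using finite_edges fiber_sum
      by (intro sum_edges_between_pullback[OF finite_new_edges _ origin_new_edges]) auto
    then show ?thesis using sum_edges_between_remove_null[OF cancelling] by (simp add: Eji_def)
  qed
  then show ?thesis by (simp add: laplacian_def)
qed

lemma neg_new_edges:
  assumes "c \<in> neg_edges new_edges new_label"
  shows "c = prod_encode (origin c, 0)" "origin c \<in> other_neg" "new_label c = \<pi> (origin c)"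
proof -
  have c: "c \<in> candidates" "new_label c < 0"
    using assms by (auto simp: neg_edges_def new_edges_def)
  then consider (copy) e where "e \<in> E - Eji" "c = prod_encode (e, 0)"
    | (share) q d where "c = prod_encode (q, Suc d)"
    unfolding candidates_def by auto
  then obtain e where e: "e \<in> E - Eji" "e \<notin> supply_edges" "c = prod_encode (e, 0)"
  proof cases
    case (copy e)
    moreover have "e \<notin> supply_edges" using c(2) copy_label_nonneg[of e] copy(2) by force
    ultimately show ?thesis using that by blast
  next
    case (share q d)
    then show ?thesis using c(2) plan_nonneg[of q d] leD by simp
  qed
  then have "new_label c = \<pi> e" by (simp add: new_label_copy)
  moreover have "e \<notin> Nji" using e by (simp add: Nji_def)
  ultimately show "c = prod_encode (origin c, 0)" "origin c \<in> other_neg" "new_label c = \<pi> (origin c)"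
    using e c(2) by (auto simp: other_neg_def neg_edges_def)
qed

lemma share_partner:
  assumes "d \<in> other_neg" "q \<in> supply_edges" "x q d \<noteq> 0"
  shows "\<mu> d \<inter> Pji \<noteq> {}"
proof
  assume "\<mu> d \<inter> Pji = {}"
  then have "(\<Sum>q\<in>supply_edges. x q d) = 0" using plan_demand[OF assms(1)] by (simp add: demand_def)
  then show False
    using assms(2,3) by (simp add: sum_nonneg_eq_0_iff[OF finite_supply] plan_nonneg)
qed

lemma new_cycle:
  assumes "is_cycle new_edges (s \<circ> origin) (t \<circ> origin) c"
  shows "is_cycle E s t (map origin c)"
    and "cycle_nodes (s \<circ> origin) c = cycle_nodes s (map origin c)"
  using is_cycle_map[OF assms, of E] origin_new_edges by auto

lemma new_mu_cases:
  assumes "y \<in> new_mu c"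
  obtains (copy) q where "q \<in> \<mu> (origin c) - Pji" "y = prod_encode (q, 0)"
    | (share) q where "q \<in> supply_edges" "x q (origin c) \<noteq> 0" "y = prod_encode (q, Suc (origin c))"
  using assms unfolding new_mu_def by blast

lemma new_mu_subset_pos:
  assumes c: "c \<in> neg_edges new_edges new_label"
  shows "new_mu c \<subseteq> pos_edges new_edges new_label"
proof
  fix y assume y: "y \<in> new_mu c"
  have d: "origin c \<in> other_neg" using neg_new_edges(2)[OF c] .
  then have dneg: "origin c \<in> neg_edges E \<pi>" by (simp add: other_neg_def)
  from y show "y \<in> pos_edges new_edges new_label"
  proof (cases rule: new_mu_cases)
    case (copy q)
    have pos: "q \<in> pos_edges E \<pi>" using copy mu_subset_pos[OF dneg] by auto
    then have "q \<in> E - Eji" using copy pos_edges_subset by (auto simp: Pji_def)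
    moreover have "q \<notin> supply_edges"
      using copy mu_other_neg_disjoint[OF d] by (auto simp: supply_edges_def)
    ultimately show ?thesis
      using copy pos copy_in_candidates by (auto simp: pos_edges_def new_edges_def new_label_copy)
  next
    case (share q)
    then have "0 < x q (origin c)" using plan_nonneg by (simp add: less_le)
    then show ?thesis
      using share d share_in_candidates by (auto simp: pos_edges_def new_edges_def)
  qed
qed

lemma new_mu_source:
  assumes c: "c \<in> neg_edges new_edges new_label" and y: "y \<in> new_mu c"
  shows "s (origin y) = s (origin c)"
proof -
  have d: "origin c \<in> other_neg" using neg_new_edges(2)[OF c] .
  then have dneg: "origin c \<in> neg_edges E \<pi>" by (simp add: other_neg_def)
  from y show ?thesis
  proof (cases rule: new_mu_cases)
    case (copy q)
    then show ?thesis using mu_source[OF dneg] by simp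
  next
    case (share q)
    obtain p where p: "p \<in> \<mu> (origin c)" "p \<in> Pji" using share_partner[OF d share(1,2)] by blast
    then have "s (origin c) = j" using mu_source[OF dneg p(1)] by (simp add: Pji_def Eji_iff)
    then show ?thesis using share supply_source by simp
  qed
qed

lemma new_mu_cycle:
  assumes c: "c \<in> neg_edges new_edges new_label" and y: "y \<in> new_mu c"
    and cyc: "is_cycle new_edges (s \<circ> origin) (t \<circ> origin) c'" "y \<in> set c'"
  shows "t (origin c) \<in> cycle_nodes (s \<circ> origin) c'"
proof -
  have d: "origin c \<in> other_neg" using neg_new_edges(2)[OF c] .
  then have dneg: "origin c \<in> neg_edges E \<pi>" by (simp add: other_neg_def)
  have yc: "origin y \<in> set (map origin c')" using cyc(2) by simp
  from y have "t (origin c) \<in> cycle_nodes s (map origin c')"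
  proof (cases rule: new_mu_cases)
    case (copy q)
    then show ?thesis using mu_cycle[OF dneg _ new_cycle(1)[OF cyc(1)]] yc by auto
  next
    case (share q)
    obtain p where "p \<in> \<mu> (origin c)" "p \<in> Pji" using share_partner[OF d share(1,2)] by blast
    then show ?thesis
      using mu_cycle_through_supply[OF d _ _ share(1) new_cycle(1)[OF cyc(1)]] share yc by simp
  qed
  then show ?thesis using new_cycle(2)[OF cyc(1)] by simp
qed

lemma new_mu_disjoint:
  assumes "c \<in> neg_edges new_edges new_label" "c' \<in> neg_edges new_edges new_label" "c \<noteq> c'"
  shows "new_mu c \<inter> new_mu c' = {}"
proof -
  have ne: "origin c \<noteq> origin c'"
    using neg_new_edges(1)[OF assms(1)] neg_new_edges(1)[OF assms(2)] assms(3) by metis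
  moreover have "origin c \<in> neg_edges E \<pi>" "origin c' \<in> neg_edges E \<pi>"
    using neg_new_edges(2) assms(1,2) by (auto simp: other_neg_def)
  ultimately have "\<mu> (origin c) \<inter> \<mu> (origin c') = {}" using mu_disjoint by blast
  then show ?thesis using ne unfolding new_mu_def by auto
qed

lemma new_cycle_card_neg:
  assumes cyc: "is_cycle new_edges (s \<circ> origin) (t \<circ> origin) c"
  shows "card (set c \<inter> neg_edges new_edges new_label) \<le> 1"
proof -
  have "card (set c \<inter> neg_edges new_edges new_label) \<le> card (set (map origin c) \<inter> neg_edges E \<pi>)"
  proof (rule card_inj_on_le)
    show "inj_on origin (set c \<inter> neg_edges new_edges new_label)"
      by (rule inj_onI) (metis IntD2 neg_new_edges(1))
    show "origin ` (set c \<inter> neg_edges new_edges new_label) \<subseteq> set (map origin c) \<inter> neg_edges E \<pi>"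
      using neg_new_edges(2) by (auto simp: other_neg_def)
  qed simp
  also have "\<dots> \<le> 1" using cycle_card_neg[OF new_cycle(1)[OF cyc]] .
  finally show ?thesis .
qed

lemma new_edge_partition: "edge_partition new_edges (s \<circ> origin) (t \<circ> origin) new_label new_mu"
  unfolding edge_partition_def
  using new_cycle_card_neg new_mu_subset_pos new_mu_source new_mu_cycle new_mu_disjoint
  by (auto simp: new_edges_def)

lemma new_balanced:
  assumes c: "c \<in> neg_edges new_edges new_label"
  shows "0 \<le> new_label c + sum new_label (new_mu c)"
proof -
  define d where "d = origin c"
  have d: "d \<in> other_neg" and label: "new_label c = \<pi> d"
    using neg_new_edges[OF c] by (simp_all add: d_def)
  then have dneg: "d \<in> neg_edges E \<pi>" by (simp add: other_neg_def)
  let ?Q = "{q \<in> supply_edges. x q d \<noteq> 0}"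
  have copies: "sum new_label ((\<lambda>q. prod_encode (q, 0)) ` (\<mu> d - Pji)) = sum \<pi> (\<mu> d - Pji)"
  proof -
    have "q \<notin> supply_edges" if "q \<in> \<mu> d" for q
      using that mu_other_neg_disjoint[OF d] by (auto simp: supply_edges_def)
    then show ?thesis by (subst sum.reindex) (auto simp: inj_on_def new_label_copy)
  qed
  have shares: "sum new_label ((\<lambda>q. prod_encode (q, Suc d)) ` ?Q) = demand d"
  proof -
    have "sum new_label ((\<lambda>q. prod_encode (q, Suc d)) ` ?Q) = (\<Sum>q\<in>?Q. x q d)"
      by (subst sum.reindex) (auto simp: inj_on_def)
    also have "\<dots> = (\<Sum>q\<in>supply_edges. x q d)"
      unfolding sum.inter_filter[OF finite_supply] by (intro sum.cong) auto
    finally show ?thesis using plan_demand[OF d] by simp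
  qed
  have "sum new_label (new_mu c) = sum \<pi> (\<mu> d - Pji) + demand d"
    unfolding new_mu_def d_def[symmetric] using finite_mu[OF dneg] finite_supply copies shares
    by (subst sum.union_disjoint) auto
  also have "\<dots> = sum \<pi> (\<mu> d)"
    using sum.Int_Diff[OF finite_mu[OF dneg], of \<pi> Pji] by (simp add: demand_def add.commute)
  finally show ?thesis using balanced dneg label by simp
qed

lemma P_graph_new: "P_graph m new_edges (s \<circ> origin) (t \<circ> origin) new_label"
proof -
  have "multidigraph m new_edges (s \<circ> origin) (t \<circ> origin)"
    using graph finite_new_edges origin_new_edges by (auto simp: multidigraph_def)
  then show ?thesis using new_edge_partition new_balanced unfolding P_graph_def by blast
qed

lemma new_edges_between_ji: "edges_between new_edges (s \<circ> origin) (t \<circ> origin) j i = {}"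
  unfolding edges_between_def using origin_new_edges Eji_iff by fastforce

lemma split_from_new: "split_from E s t \<pi> new_edges (s \<circ> origin) (t \<circ> origin) new_label j i"
proof -
  have "E - Eji \<subseteq> origin ` new_edges"
  proof
    fix e assume e: "e \<in> E - Eji"
    then have "sum new_label {c \<in> new_edges. origin c = e} \<noteq> 0"
      using fiber_sum label_nonzero by simp
    then have "{c \<in> new_edges. origin c = e} \<noteq> {}" by force
    then show "e \<in> origin ` new_edges" by auto
  qed
  then have image: "origin ` new_edges = E - Eji" using origin_new_edges by blast
  have "card {c \<in> new_edges. origin c = e} \<noteq> 1 \<longrightarrow> s e = j" if "e \<in> E - Eji" for e
    using that fiber_outside_supply supply_source by (cases "e \<in> supply_edges") auto
  then show ?thesis
    unfolding split_from_def Eji_def[symmetric] using image fiber_sum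
    by (intro exI[of _ origin]) auto
qed

end

context cancelling_pair
begin

lemma reduced_P_graph_exists:
  "\<exists>E' s' t' (\<pi>' :: nat \<Rightarrow> 'r). P_graph m E' s' t' \<pi>' \<and>
     (\<forall>a b. laplacian m E' s' t' \<pi>' a b = laplacian m E s t \<pi> a b) \<and>
     edges_between E' s' t' j i = {} \<and> split_from E s t \<pi> E' s' t' \<pi>' j i"
proof -
  obtain x where "\<forall>q d. 0 \<le> x q d" "\<forall>q\<in>supply_edges. (\<Sum>d\<in>other_neg. x q d) \<le> \<pi> q"
    "\<forall>d\<in>other_neg. (\<Sum>q\<in>supply_edges. x q d) = demand d"
    by (rule exists_plan)
  then interpret plan: cancelling_pair_plan m E s t \<pi> \<mu> i j x
    by unfold_locales auto
  show ?thesis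
    using plan.P_graph_new plan.laplacian_new plan.new_edges_between_ji plan.split_from_new
    by blast
qed

end

theorem lemma3p11:
  fixes m :: nat and E :: "nat set" and s t :: "nat \<Rightarrow> nat"
    and \<pi> :: "nat \<Rightarrow> 'r::linordered_ring_strict" and i j :: nat
  assumes "P_graph m E s t \<pi>"
    and "i \<in> nodes m" and "j \<in> nodes m"
    and "edges_between E s t j i \<noteq> {}"
    and "laplacian m E s t \<pi> i j = 0"
  shows "\<exists>E' s' t' (\<pi>' :: nat \<Rightarrow> 'r).
           P_graph m E' s' t' \<pi>' \<and>
           (\<forall>a\<in>nodes m. \<forall>b\<in>nodes m. laplacian m E' s' t' \<pi>' a b = laplacian m E s t \<pi> a b) \<and>
           edges_between E' s' t' j i = {} \<and>
           split_from E s t \<pi> E' s' t' \<pi>' j i"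
proof -
  obtain \<mu> where graph: "multidigraph m E s t" and partition: "edge_partition E s t \<pi> \<mu>"
    and balanced: "\<forall>e\<in>neg_edges E \<pi>. 0 \<le> \<pi> e + sum \<pi> (\<mu> e)"
    using assms(1) unfolding P_graph_def by blast
  have "i \<noteq> j"
    using assms(4) graph by (auto simp: edges_between_def multidigraph_def)
  moreover have "sum \<pi> (edges_between E s t j i) = 0"
    using assms(5) \<open>i \<noteq> j\<close> by (simp add: laplacian_def)
  ultimately interpret cancelling_pair m E s t \<pi> \<mu> i j
    using graph partition balanced by unfold_locales
  show ?thesis using reduced_P_graph_exists by blast
qed

end
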